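(* For every $m\in\mathbb Z_{\ge0}$, the kernel of $\hat H_1^{(-2)}$ restricted to the space $\mathbb C[X_{12},X_{13},X_{23}]_m$ of homogeneous polynomials of degree $m$ is $$\operatorname{Span}_{\mathbb C}\left\{\mathfrak P_{m,l,l}\;:\;0\le l\le\lfloor m/2\rfloor\right\}.$$
   Context: $\hat H_1^{(-2)}=\frac{\partial^2}{\partial X_{12}^2}+\frac{\partial^2}{\partial X_{13}^2}+\frac{X_{12}^2+X_{13}^2-X_{23}^2}{X_{12}X_{13}}\frac{\partial^2}{\partial X_{12}\partial X_{13}}+\frac{2}{X_{12}}\frac{\partial}{\partial X_{12}}+\frac{2}{X_{13}}\frac{\partial}{\partial X_{13}}$. For integers $m,k,l\ge0$ with $k+l\le m$, $\mathfrak P_{m,k,l}=X_{23}^m\,\mathcal P_k\!\left(\frac{X_{12}-X_{13}}{X_{23}}\right)\mathcal P_l\!\left(\frac{X_{12}+X_{13}}{X_{23}}\right)\in\mathbb C[X_{12},X_{13},X_{23}]$, where $\mathcal P_n$ is the Legendre polynomial of degree $n$. *)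

theory Defs
  imports "HOL-Computational_Algebra.Polynomial"
begin

text \<open>Polynomials in C[X12,X13,X23] are represented as nested univariate
polynomials: innermost variable X12, middle X13, outermost X23.\<close>

type_synonym mpoly3 = "complex poly poly poly"

definition cst3 :: "complex \<Rightarrow> mpoly3" where
  "cst3 c = [:[:[:c:]:]:]"

definition X12 :: mpoly3 where "X12 = [:[:[:0, 1:]:]:]"
definition X13 :: mpoly3 where "X13 = [:[:0, 1:]:]"
definition X23 :: mpoly3 where "X23 = [:0, 1:]"

definition mcoeff :: "mpoly3 \<Rightarrow> nat \<Rightarrow> nat \<Rightarrow> nat \<Rightarrow> complex" where
  "mcoeff p a b c = coeff (coeff (coeff p c) b) a"

definition homogeneous3 :: "nat \<Rightarrow> mpoly3 \<Rightarrow> bool" where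
  "homogeneous3 m p \<longleftrightarrow> (\<forall>a b c. mcoeff p a b c \<noteq> 0 \<longrightarrow> a + b + c = m)"

definition eval3 :: "mpoly3 \<Rightarrow> complex \<Rightarrow> complex \<Rightarrow> complex \<Rightarrow> complex" where
  "eval3 p x y z = poly (poly (poly p [:[:z:]:]) [:y:]) x"

definition d12 :: "mpoly3 \<Rightarrow> mpoly3" where "d12 p = map_poly (map_poly pderiv) p"
definition d13 :: "mpoly3 \<Rightarrow> mpoly3" where "d13 p = map_poly pderiv p"

text \<open>The operator H_1^(-2), applied to a polynomial, as a function on the
locus X12 \<noteq> 0, X13 \<noteq> 0 where its coefficients are defined.\<close>
definition H1 :: "mpoly3 \<Rightarrow> complex \<Rightarrow> complex \<Rightarrow> complex \<Rightarrow> complex" where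
  "H1 p x y z =
     eval3 (d12 (d12 p)) x y z + eval3 (d13 (d13 p)) x y z
     + (x^2 + y^2 - z^2) / (x * y) * eval3 (d12 (d13 p)) x y z
     + 2 / x * eval3 (d12 p) x y z + 2 / y * eval3 (d13 p) x y z"

definition kerH1 :: "mpoly3 set" where
  "kerH1 = {p. \<forall>x y z. x \<noteq> 0 \<longrightarrow> y \<noteq> 0 \<longrightarrow> H1 p x y z = 0}"

text \<open>Legendre polynomials via Bonnet's recursion.\<close>
fun legendre :: "nat \<Rightarrow> complex poly" where
  "legendre 0 = 1"
| "legendre (Suc 0) = [:0, 1:]"
| "legendre (Suc (Suc n)) =
     smult (1 / of_nat (n + 2))
       (smult (of_nat (2 * n + 3)) ([:0, 1:] * legendre (Suc n))
        - smult (of_nat (n + 1)) (legendre n))"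

text \<open>Frak P_{m,k,l} = X23^m P_k((X12-X13)/X23) P_l((X12+X13)/X23), expanded
as a polynomial (valid since k + l \<le> m).\<close>
definition frakP :: "nat \<Rightarrow> nat \<Rightarrow> nat \<Rightarrow> mpoly3" where
  "frakP m k l =
     (\<Sum>i\<le>k. \<Sum>j\<le>l. cst3 (coeff (legendre k) i * coeff (legendre l) j)
        * (X12 - X13) ^ i * (X12 + X13) ^ j * X23 ^ (m - i - j))"

end

theory Submission
  imports Defs
begin

text \<open>
  Multiplying by \<open>X12 X13\<close> turns the operator into the polynomial operator \<open>H1_cleared\<close>.
  In the coordinates \<open>s = X12 - X13\<close>, \<open>t = X12 + X13\<close>, \<open>z = X23\<close> it acts on products
  \<open>F(s) G(t)\<close> as \<open>L F \<cdot> G - F \<cdot> L G\<close>, where \<open>L = (z\<^sup>2 - w\<^sup>2) d\<^sup>2/dw\<^sup>2 - 2 w d/dw\<close> is the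
  homogenised Legendre operator. The homogenised Legendre polynomial \<open>z\<^sup>k P\<^sub>k(w/z)\<close> is an
  eigenfunction of \<open>L\<close> with eigenvalue \<open>-k(k+1)\<close>, so \<open>frakP m k l\<close> is an eigenfunction of
  \<open>H1_cleared\<close> with eigenvalue \<open>l(l+1) - k(k+1)\<close>, and the diagonal ones lie in the kernel.

  Conversely, let \<open>p\<close> be a homogeneous kernel element of degree at most \<open>n\<close> in \<open>(X12, X13)\<close>.
  The coefficient of \<open>X12\<^sup>a\<^sup>+\<^sup>1 X13\<^sup>b\<^sup>+\<^sup>1\<close> in \<open>H1_cleared p\<close> links the degree \<open>n\<close> coefficients of
  \<open>p\<close> at \<open>X12\<^sup>a\<^sup>+\<^sup>2 X13\<^sup>b\<close> and \<open>X12\<^sup>a X13\<^sup>b\<^sup>+\<^sup>2\<close> by nonzero factors, and the coefficients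
  of the monomials without \<open>X12\<close>, resp. \<open>X13\<close>, force those at \<open>X12 X13\<^sup>n\<^sup>-\<^sup>1\<close> and \<open>X12\<^sup>n\<^sup>-\<^sup>1 X13\<close> to vanish.
  So the degree \<open>n\<close> part of \<open>p\<close> vanishes for odd \<open>n\<close> and is determined by its \<open>X13\<^sup>n\<close>
  coefficient for \<open>n = 2 l\<close>. There \<open>frakP m l l\<close> has the coefficient
  \<open>\<plusminus>(lead coeff P\<^sub>l)\<^sup>2 \<noteq> 0\<close>, so subtracting a multiple of it lowers the degree, and
  induction on \<open>n\<close> finishes the proof.
\<close>

section \<open>Derivations\<close>

locale derivation =
  fixes D :: "'a::idom \<Rightarrow> 'a"
  assumes add: "D (a + b) = D a + D b"
    and mult: "D (a * b) = D a * b + a * D b"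
begin

lemma zero: "D 0 = 0"
proof -
  have "D 0 = D 0 + D 0"
    using add[of 0 0] by simp
  then show ?thesis
    by (metis add_cancel_right_right)
qed

lemma diff: "D (a - b) = D a - D b"
  by (metis add diff_add_cancel add_diff_cancel_right')

lemma one: "D 1 = 0"
  using mult[of 1 1] by (metis add_cancel_right_right mult_1 mult_1_right)

lemma of_nat: "D (of_nat n) = 0"
  by (induct n) (simp_all add: zero add one)

lemma power_Suc: "D (a ^ Suc n) = of_nat (Suc n) * a ^ n * D a"
  by (induct n) (simp_all add: mult algebra_simps)

lemma power_eq_0: "D a = 0 \<Longrightarrow> D (a ^ n) = 0"
  by (induct n) (simp_all add: mult one)

lemma sum: "D (\<Sum>i\<in>A. g i) = (\<Sum>i\<in>A. D (g i))"
  by (induct A rule: infinite_finite_induct) (simp_all add: zero add)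

lemma poly_chain:
  assumes "\<And>i. D (coeff F i) = 0"
  shows "D (poly F w) = poly (pderiv F) w * D w"
  using assms
proof (induct F rule: pCons_induct)
  case (pCons a F)
  have "D a = 0" "\<And>i. D (coeff F i) = 0"
    using pCons.prems[of 0] pCons.prems[of "Suc _"] by simp_all
  with pCons.hyps(2) show ?case
    by (simp add: add mult pderiv_pCons algebra_simps)
qed (simp add: zero)

lemma coeff_pderiv_eq_0: "(\<And>i. D (coeff F i) = 0) \<Longrightarrow> D (coeff (pderiv F) i) = 0"
  by (simp add: coeff_pderiv add mult one of_nat)

end

lemma derivation_map_poly:
  assumes "derivation D"
  shows "derivation (map_poly D)"
proof
  interpret derivation D by fact
  show "map_poly D (p + q) = map_poly D p + map_poly D q" for p q
    by (intro poly_eqI) (simp add: coeff_map_poly zero add)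
  show "map_poly D (p * q) = map_poly D p * q + p * map_poly D q" for p q
  proof (intro poly_eqI)
    fix n
    have "coeff (map_poly D (p * q)) n = D (\<Sum>i\<le>n. coeff p i * coeff q (n - i))"
      by (simp add: coeff_map_poly zero coeff_mult)
    also have "\<dots> = (\<Sum>i\<le>n. D (coeff p i) * coeff q (n - i) + coeff p i * D (coeff q (n - i)))"
      by (simp add: sum mult)
    also have "\<dots> = coeff (map_poly D p * q + p * map_poly D q) n"
      by (simp add: coeff_mult coeff_map_poly zero sum.distrib)
    finally show "coeff (map_poly D (p * q)) n = coeff (map_poly D p * q + p * map_poly D q) n" .
  qed
qed

lemma derivation_pderiv: "derivation (pderiv :: 'a::idom poly \<Rightarrow> 'a poly)"
  by unfold_locales (simp_all add: pderiv_add pderiv_mult algebra_simps)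

interpretation d12: derivation d12
  unfolding d12_def[abs_def] by (intro derivation_map_poly derivation_pderiv)

interpretation d13: derivation d13
  unfolding d13_def[abs_def] by (intro derivation_map_poly derivation_pderiv)

lemma d12_basic: "d12 X12 = 1" "d12 X13 = 0" "d12 X23 = 0" "d12 (cst3 c) = 0"
  by (simp_all add: d12_def X12_def X13_def X23_def cst3_def map_poly_pCons pderiv_pCons pCons_one map_poly_1)

lemma d13_basic: "d13 X12 = 0" "d13 X13 = 1" "d13 X23 = 0" "d13 (cst3 c) = 0"
  by (simp_all add: d13_def X12_def X13_def X23_def cst3_def map_poly_pCons pderiv_pCons pCons_one map_poly_1)

lemma pderiv_basic: "pderiv X12 = 0" "pderiv X13 = 0" "pderiv X23 = 1" "pderiv (cst3 c) = 0"
  by (simp_all add: X12_def X13_def X23_def cst3_def pderiv_pCons)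

section \<open>Coefficients, evaluation and clearing denominators\<close>

lemma mpoly3_eq_iff: "p = q \<longleftrightarrow> (\<forall>a b c. mcoeff p a b c = mcoeff q a b c)"
  unfolding mcoeff_def by (metis poly_eq_iff)

lemma mcoeff_simps:
  "mcoeff (p + q) a b c = mcoeff p a b c + mcoeff q a b c"
  "mcoeff (p - q) a b c = mcoeff p a b c - mcoeff q a b c"
  "mcoeff 0 a b c = 0"
  "mcoeff (cst3 k * p) a b c = k * mcoeff p a b c"
  by (simp_all add: mcoeff_def cst3_def)

lemma mcoeff_2_mult: "mcoeff (2 * p) a b c = 2 * mcoeff p a b c"
  by (simp only: mult_2 mcoeff_simps)

lemma mcoeff_sum: "mcoeff (\<Sum>i\<in>A. f i) a b c = (\<Sum>i\<in>A. mcoeff (f i) a b c)"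
  by (simp add: mcoeff_def coeff_sum)

lemma mcoeff_X12_mult: "mcoeff (X12 * p) a b c = (if a = 0 then 0 else mcoeff p (a - 1) b c)"
  by (simp add: mcoeff_def X12_def coeff_pCons split: nat.splits)

lemma mcoeff_X13_mult: "mcoeff (X13 * p) a b c = (if b = 0 then 0 else mcoeff p a (b - 1) c)"
  by (simp add: mcoeff_def X13_def coeff_pCons split: nat.splits)

lemma mcoeff_X23_mult: "mcoeff (X23 * p) a b c = (if c = 0 then 0 else mcoeff p a b (c - 1))"
  by (simp add: mcoeff_def X23_def coeff_pCons split: nat.splits)

lemma mcoeff_X23_power_mult:
  "mcoeff (X23 ^ e * p) a b c = (if c < e then 0 else mcoeff p a b (c - e))"
  by (induct e arbitrary: c) (auto simp: mult.assoc mcoeff_X23_mult split: if_splits)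

lemma mcoeff_d12: "mcoeff (d12 p) a b c = of_nat (Suc a) * mcoeff p (Suc a) b c"
  by (simp add: mcoeff_def d12_def coeff_map_poly coeff_pderiv)

lemma mcoeff_d13: "mcoeff (d13 p) a b c = of_nat (Suc b) * mcoeff p a (Suc b) c"
  by (simp add: mcoeff_def d13_def coeff_map_poly coeff_pderiv of_nat_mult_conv_smult
      del: of_nat_Suc)

lemma mcoeff_pderiv: "mcoeff (pderiv p) a b c = of_nat (Suc c) * mcoeff p a b (Suc c)"
  by (simp add: mcoeff_def coeff_pderiv of_nat_mult_conv_smult del: of_nat_Suc)

lemma cst3_simps:
  "cst3 (a * b) = cst3 a * cst3 b" "cst3 (a + b) = cst3 a + cst3 b"
  "cst3 (a - b) = cst3 a - cst3 b" "cst3 0 = 0" "cst3 1 = 1"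
  by (simp_all add: cst3_def pCons_one)

lemma of_nat_eq_cst3: "of_nat n = cst3 (of_nat n)"
  by (induct n) (simp_all add: cst3_simps)

lemma eval3_simps:
  "eval3 (p + q) x y z = eval3 p x y z + eval3 q x y z"
  "eval3 (p - q) x y z = eval3 p x y z - eval3 q x y z"
  "eval3 (p * q) x y z = eval3 p x y z * eval3 q x y z"
  "eval3 (p ^ n) x y z = eval3 p x y z ^ n"
  "eval3 2 x y z = 2"
  "eval3 X12 x y z = x" "eval3 X13 x y z = y" "eval3 X23 x y z = z"
  by (simp_all add: eval3_def X12_def X13_def X23_def poly_power)

definition H1_cleared :: "mpoly3 \<Rightarrow> mpoly3" where
  "H1_cleared p = X12 * X13 * d12 (d12 p) + X12 * X13 * d13 (d13 p)
     + (X12\<^sup>2 + X13\<^sup>2 - X23\<^sup>2) * d12 (d13 p) + 2 * X13 * d12 p + 2 * X12 * d13 p"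

lemma eval3_H1_cleared:
  "x \<noteq> 0 \<Longrightarrow> y \<noteq> 0 \<Longrightarrow> eval3 (H1_cleared p) x y z = x * y * H1 p x y z"
  unfolding H1_cleared_def H1_def eval3_simps by (simp add: field_simps power2_eq_square)

lemma poly_eq_0_if_zero_off_0:
  fixes r :: "'a::{idom,ring_char_0} poly"
  assumes "\<And>x. x \<noteq> 0 \<Longrightarrow> poly r x = 0"
  shows "r = 0"
proof (rule ccontr)
  assume "r \<noteq> 0"
  then have "finite {x. poly r x = 0}"
    by (rule poly_roots_finite)
  moreover have "- {0} \<subseteq> {x. poly r x = 0}"
    using assms by auto
  ultimately have "finite (- {0::'a})"
    by (rule finite_subset[rotated])
  then show False
    by (simp add: infinite_UNIV_char_0)
qed

lemma poly_poly_eq_0_if_zero_off_axes: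
  fixes q :: "'a::{idom,ring_char_0} poly poly"
  assumes "\<And>x y. x \<noteq> 0 \<Longrightarrow> y \<noteq> 0 \<Longrightarrow> poly (poly q [:y:]) x = 0"
  shows "q = 0"
proof -
  have swap: "poly (poly q [:y:]) x = poly (map_poly (\<lambda>c. poly c x) q) y" for x y
    by (induct q rule: pCons_induct) (simp_all add: map_poly_pCons)
  have "poly (coeff q i) x = 0" if "x \<noteq> 0" for i x
  proof -
    have "map_poly (\<lambda>c. poly c x) q = 0"
      by (rule poly_eq_0_if_zero_off_0) (use assms that in \<open>simp add: swap[symmetric]\<close>)
    then show ?thesis
      by (metis coeff_map_poly coeff_0 poly_0)
  qed
  then show ?thesis
    by (metis poly_eq_0_if_zero_off_0 poly_eq_iff coeff_0)
qed

lemma mpoly3_eq_0_if_eval3_zero: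
  assumes "\<And>x y z. x \<noteq> 0 \<Longrightarrow> y \<noteq> 0 \<Longrightarrow> eval3 q x y z = 0"
  shows "q = 0"
proof -
  have swap: "eval3 q x y z = poly (map_poly (\<lambda>c. poly (poly c [:y:]) x) q) z" for x y z
    unfolding eval3_def by (induct q rule: pCons_induct) (simp_all add: map_poly_pCons)
  have "poly (poly (coeff q i) [:y:]) x = 0" if "x \<noteq> 0" "y \<noteq> 0" for i x y
  proof -
    have "map_poly (\<lambda>c. poly (poly c [:y:]) x) q = 0"
      using assms[OF that] by (simp add: swap poly_all_0_iff_0[symmetric])
    then show ?thesis
      by (metis coeff_map_poly coeff_0 poly_0)
  qed
  then show ?thesis
    by (metis poly_poly_eq_0_if_zero_off_axes poly_eq_iff coeff_0)
qed

lemma kerH1_iff_H1_cleared: "p \<in> kerH1 \<longleftrightarrow> H1_cleared p = 0"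
proof
  assume "p \<in> kerH1"
  then show "H1_cleared p = 0"
    by (intro mpoly3_eq_0_if_eval3_zero) (simp add: eval3_H1_cleared kerH1_def)
next
  assume "H1_cleared p = 0"
  then show "p \<in> kerH1"
    using eval3_H1_cleared[of _ _ p] by (simp add: kerH1_def eval3_def)
qed

lemma H1_cleared_add: "H1_cleared (p + q) = H1_cleared p + H1_cleared q"
  by (simp add: H1_cleared_def d12.add d13.add algebra_simps)

lemma H1_cleared_diff: "H1_cleared (p - q) = H1_cleared p - H1_cleared q"
  by (simp add: H1_cleared_def d12.diff d13.diff algebra_simps)

lemma H1_cleared_0: "H1_cleared 0 = 0"
  by (simp add: H1_cleared_def d12.zero d13.zero)

lemma H1_cleared_sum: "H1_cleared (\<Sum>i\<in>A. f i) = (\<Sum>i\<in>A. H1_cleared (f i))"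
  by (induct A rule: infinite_finite_induct) (simp_all add: H1_cleared_add H1_cleared_0)

lemma H1_cleared_mult_const:
  assumes "d12 q = 0" "d13 q = 0"
  shows "H1_cleared (q * p) = q * H1_cleared p"
  by (simp add: H1_cleared_def d12.mult d13.mult assms algebra_simps)

lemma H1_cleared_cst3_mult: "H1_cleared (cst3 k * p) = cst3 k * H1_cleared p"
  by (rule H1_cleared_mult_const) (simp_all add: d12_basic d13_basic)

section \<open>Top-degree coefficients of kernel elements\<close>

definition deg_X12_X13_less :: "nat \<Rightarrow> mpoly3 \<Rightarrow> bool" where
  "deg_X12_X13_less n p \<longleftrightarrow> (\<forall>a b c. n \<le> a + b \<longrightarrow> mcoeff p a b c = 0)"

lemma mcoeff_H1_cleared_interior:
  assumes "\<And>c. mcoeff p (a + 2) (b + 2) c = 0"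
  shows "mcoeff (H1_cleared p) (Suc a) (Suc b) c =
    of_nat (a + b + 3) * (of_nat (a + 2) * mcoeff p (a + 2) b c + of_nat (b + 2) * mcoeff p a (b + 2) c)"
  using assms
  unfolding H1_cleared_def power2_eq_square distrib_right left_diff_distrib mult.assoc
  by (simp add: mcoeff_simps mcoeff_2_mult mcoeff_X12_mult mcoeff_X13_mult mcoeff_X23_mult
      mcoeff_d12 mcoeff_d13 del: of_nat_Suc) (simp add: algebra_simps)

lemma mcoeff_H1_cleared_edge_X13:
  assumes "\<And>c. mcoeff p 1 (b + 2) c = 0"
  shows "mcoeff (H1_cleared p) 0 (Suc b) c = of_nat (b + 2) * mcoeff p 1 b c"
  using assms
  unfolding H1_cleared_def power2_eq_square distrib_right left_diff_distrib mult.assoc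
  by (simp add: mcoeff_simps mcoeff_2_mult mcoeff_X12_mult mcoeff_X13_mult mcoeff_X23_mult
      mcoeff_d12 mcoeff_d13 del: of_nat_Suc) (auto simp: algebra_simps)

lemma mcoeff_H1_cleared_edge_X12:
  assumes "\<And>c. mcoeff p (a + 2) 1 c = 0"
  shows "mcoeff (H1_cleared p) (Suc a) 0 c = of_nat (a + 2) * mcoeff p a 1 c"
  using assms
  unfolding H1_cleared_def power2_eq_square distrib_right left_diff_distrib mult.assoc
  by (simp add: mcoeff_simps mcoeff_2_mult mcoeff_X12_mult mcoeff_X13_mult mcoeff_X23_mult
      mcoeff_d12 mcoeff_d13 del: of_nat_Suc) (auto simp: algebra_simps)

lemma kernel_top_level_step:
  assumes "H1_cleared p = 0" "deg_X12_X13_less (Suc n) p" "i + 2 \<le> n"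
  shows "mcoeff p (i + 2) (n - (i + 2)) c = 0 \<longleftrightarrow> mcoeff p i (n - i) c = 0"
proof -
  define b where "b = n - (i + 2)"
  have n: "n = i + b + 2" and "n - i = b + 2"
    using assms(3) by (simp_all add: b_def)
  have "of_nat (n + 1) * (of_nat (i + 2) * mcoeff p (i + 2) b c + of_nat (b + 2) * mcoeff p i (b + 2) c)
      = mcoeff (H1_cleared p) (Suc i) (Suc b) c"
    using assms(2) by (subst mcoeff_H1_cleared_interior) (simp_all add: deg_X12_X13_less_def n)
  also have "\<dots> = 0"
    using assms(1) by (simp add: mcoeff_simps)
  finally have "of_nat (i + 2) * mcoeff p (i + 2) b c + of_nat (b + 2) * mcoeff p i (b + 2) c = 0"
    by (simp only: mult_eq_0_iff of_nat_eq_0_iff) simp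
  moreover have "(of_nat (i + 2) :: complex) \<noteq> 0" "(of_nat (b + 2) :: complex) \<noteq> 0"
    by (simp_all only: of_nat_eq_0_iff)
  ultimately show ?thesis
    unfolding b_def[symmetric] \<open>n - i = b + 2\<close> by auto
qed

lemma kernel_top_level_edges:
  assumes "H1_cleared p = 0" "deg_X12_X13_less (Suc n) p" "1 \<le> n"
  shows "mcoeff p 1 (n - 1) c = 0" "mcoeff p (n - 1) 1 c = 0"
proof -
  obtain k where n: "n = Suc k"
    using assms(3) by (cases n) auto
  have "of_nat (k + 2) * mcoeff p 1 k c = mcoeff (H1_cleared p) 0 (Suc k) c"
    "of_nat (k + 2) * mcoeff p k 1 c = mcoeff (H1_cleared p) (Suc k) 0 c"
    using assms(2) by (simp_all add: mcoeff_H1_cleared_edge_X13 mcoeff_H1_cleared_edge_X12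
        deg_X12_X13_less_def n)
  then have "of_nat (k + 2) * mcoeff p 1 k c = 0" "of_nat (k + 2) * mcoeff p k 1 c = 0"
    using assms(1) by (simp_all add: mcoeff_simps)
  then show "mcoeff p 1 (n - 1) c = 0" "mcoeff p (n - 1) 1 c = 0"
    by (simp_all only: mult_eq_0_iff of_nat_eq_0_iff) (simp_all add: n)
qed

lemma iff_mod_2_if_step_2:
  fixes i n :: nat
  assumes "\<And>i. i + 2 \<le> n \<Longrightarrow> P (i + 2) \<longleftrightarrow> P i" and "i \<le> n"
  shows "P i \<longleftrightarrow> P (i mod 2)"
  using assms(2)
proof (induct i rule: less_induct)
  case (less i)
  show ?case
  proof (cases "i < 2")
    case False
    then obtain j where "i = j + 2"
      by (metis add.commute le_Suc_ex not_less)
    then show ?thesis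
      using less(1)[of j] less(2) assms(1)[of j] by simp
  qed simp
qed

lemma kernel_top_level_coeff_eq_0:
  assumes "H1_cleared p = 0" "deg_X12_X13_less (Suc n) p"
    and "odd n \<or> (\<forall>c. mcoeff p 0 n c = 0)" "a \<le> n"
  shows "mcoeff p a (n - a) c = 0"
proof -
  let ?P = "\<lambda>i. mcoeff p i (n - i) c = 0"
  have mod_2: "?P i \<longleftrightarrow> ?P (i mod 2)" if "i \<le> n" for i
    by (rule iff_mod_2_if_step_2[where P = ?P, OF kernel_top_level_step[OF assms(1,2)] that])
  show "?P a"
  proof (cases "odd a")
    case True
    then have "1 \<le> n" "a mod 2 = 1"
      using \<open>a \<le> n\<close> by presburger+
    then show ?thesis
      using mod_2[of a] kernel_top_level_edges(1)[OF assms(1,2)] \<open>a \<le> n\<close> by simp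
  next
    case False
    then have "a mod 2 = 0"
      by (simp add: even_iff_mod_2_eq_zero)
    moreover have "?P 0"
    proof (cases "odd n")
      case True
      then have "1 \<le> n" "(n - 1) mod 2 = 0" "n - (n - 1) = 1"
        by presburger+
      then show ?thesis
        using mod_2[of "n - 1"] kernel_top_level_edges(2)[OF assms(1,2)] by simp
    qed (use assms(3) in simp)
    ultimately show ?thesis
      using mod_2[of a] \<open>a \<le> n\<close> by simp
  qed
qed

lemma kernel_top_level_vanishes:
  assumes "H1_cleared p = 0" "deg_X12_X13_less (Suc n) p"
    and "odd n \<or> (\<forall>c. mcoeff p 0 n c = 0)"
  shows "deg_X12_X13_less n p"
  unfolding deg_X12_X13_less_def
proof (intro allI impI)
  fix a b c
  assume "n \<le> a + b"
  show "mcoeff p a b c = 0"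
  proof (cases "a + b = n")
    case True
    then show ?thesis
      using kernel_top_level_coeff_eq_0[OF assms, of a c] by (metis add_diff_cancel_left' le_add1)
  next
    case False
    then show ?thesis
      using assms(2) \<open>n \<le> a + b\<close> by (simp add: deg_X12_X13_less_def)
  qed
qed

section \<open>Coefficients of Legendre polynomials\<close>

abbreviation legendre_coeff :: "nat \<Rightarrow> nat \<Rightarrow> complex" where
  "legendre_coeff n i \<equiv> coeff (legendre n) i"

lemma legendre_coeff_0: "legendre_coeff 0 i = (if i = 0 then 1 else 0)"
  by (simp add: coeff_1)

lemma legendre_coeff_1: "legendre_coeff (Suc 0) i = (if i = 1 then 1 else 0)"
  by (simp add: coeff_pCons split: nat.split)

lemma legendre_coeff_Suc_Suc_0:
  "legendre_coeff (Suc (Suc n)) 0 = - (of_nat (n + 1) * legendre_coeff n 0) / of_nat (n + 2)"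
  by (simp add: field_simps)

lemma legendre_coeff_Suc_Suc_Suc:
  "legendre_coeff (Suc (Suc n)) (Suc i) =
     (of_nat (2 * n + 3) * legendre_coeff (Suc n) i - of_nat (n + 1) * legendre_coeff n (Suc i)) / of_nat (n + 2)"
  by (simp add: field_simps)

text \<open>Coefficient forms of \<open>P\<^sub>n\<^sub>+\<^sub>1' = x P\<^sub>n' + (n + 1) P\<^sub>n\<close> (raise) and
  \<open>x P\<^sub>n\<^sub>+\<^sub>1' - (n + 1) P\<^sub>n\<^sub>+\<^sub>1 = P\<^sub>n'\<close> (lower); the induction step for each needs the other.\<close>
lemma legendre_coeff_raise_Suc:
  assumes lower: "\<And>i. (of_nat i - of_nat n - 1) * legendre_coeff (Suc n) i = of_nat (i + 1) * legendre_coeff n (Suc i)"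
  shows "of_nat (i + 1) * legendre_coeff (Suc (Suc n)) (Suc i) = of_nat (Suc n + 1 + i) * legendre_coeff (Suc n) i"
proof -
  have n2: "(of_nat (n + 2) :: complex) \<noteq> 0"
    by (simp only: of_nat_eq_0_iff)
  have "of_nat (n + 2) * (of_nat (i + 1) * legendre_coeff (Suc (Suc n)) (Suc i))
      = of_nat (i + 1) * (of_nat (2 * n + 3) * legendre_coeff (Suc n) i)
        - of_nat (n + 1) * (of_nat (i + 1) * legendre_coeff n (Suc i))"
    using n2 by (simp add: legendre_coeff_Suc_Suc_Suc field_simps)
  also have "\<dots> = of_nat (i + 1) * (of_nat (2 * n + 3) * legendre_coeff (Suc n) i)
        - of_nat (n + 1) * ((of_nat i - of_nat n - 1) * legendre_coeff (Suc n) i)"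
    by (simp only: lower)
  also have "\<dots> = of_nat (n + 2) * (of_nat (Suc n + 1 + i) * legendre_coeff (Suc n) i)"
    by (simp add: algebra_simps)
  finally show ?thesis
    using n2 by simp
qed

lemma legendre_coeff_lower_Suc:
  assumes raise: "\<And>i. of_nat (i + 1) * legendre_coeff (Suc n) (Suc i) = of_nat (n + 1 + i) * legendre_coeff n i"
    and lower: "\<And>i. (of_nat i - of_nat n - 1) * legendre_coeff (Suc n) i = of_nat (i + 1) * legendre_coeff n (Suc i)"
  shows "(of_nat i - of_nat (Suc n) - 1) * legendre_coeff (Suc (Suc n)) i = of_nat (i + 1) * legendre_coeff (Suc n) (Suc i)"
proof -
  have n2: "(of_nat (n + 2) :: complex) \<noteq> 0"
    by (simp only: of_nat_eq_0_iff)
  show ?thesis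
  proof (cases i)
    case 0
    have "legendre_coeff (Suc n) 1 = of_nat (n + 1) * legendre_coeff n 0"
      using raise[of 0] by simp
    then show ?thesis
      using 0 n2 by (simp add: legendre_coeff_Suc_Suc_0 field_simps)
  next
    case (Suc j)
    have "of_nat (n + 2) * ((of_nat (Suc j) - of_nat (Suc n) - 1) * legendre_coeff (Suc (Suc n)) (Suc j))
        = of_nat (2 * n + 3) * ((of_nat j - of_nat n - 1) * legendre_coeff (Suc n) j)
          - (of_nat j - of_nat n - 1) * of_nat (n + 1) * legendre_coeff n (Suc j)"
      using n2 by (simp add: legendre_coeff_Suc_Suc_Suc field_simps)
    also have "\<dots> = of_nat (2 * n + 3) * (of_nat (j + 1) * legendre_coeff n (Suc j))
          - (of_nat j - of_nat n - 1) * of_nat (n + 1) * legendre_coeff n (Suc j)"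
      by (simp only: lower)
    also have "\<dots> = of_nat (n + 2) * (of_nat (n + 1 + Suc j) * legendre_coeff n (Suc j))"
      by (simp add: algebra_simps)
    also have "\<dots> = of_nat (n + 2) * (of_nat (Suc j + 1) * legendre_coeff (Suc n) (Suc (Suc j)))"
      by (simp only: raise)
    finally show ?thesis
      using n2 Suc by simp
  qed
qed

lemma legendre_coeff_raise_lower:
  "(\<forall>i. of_nat (i + 1) * legendre_coeff (Suc n) (Suc i) = of_nat (n + 1 + i) * legendre_coeff n i) \<and>
   (\<forall>i. (of_nat i - of_nat n - 1) * legendre_coeff (Suc n) i = of_nat (i + 1) * legendre_coeff n (Suc i))"
proof (induct n)
  case 0
  show ?case
    by (simp only: legendre_coeff_0 legendre_coeff_1) auto
next
  case (Suc n)
  then show ?case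
    using legendre_coeff_raise_Suc[of n] legendre_coeff_lower_Suc[of n] by blast
qed

lemma legendre_coeff_raise:
  "of_nat (i + 1) * legendre_coeff (Suc n) (Suc i) = of_nat (n + 1 + i) * legendre_coeff n i"
  using legendre_coeff_raise_lower by blast

lemma legendre_coeff_lower:
  "(of_nat i - of_nat n - 1) * legendre_coeff (Suc n) i = of_nat (i + 1) * legendre_coeff n (Suc i)"
  using legendre_coeff_raise_lower by blast

text \<open>Coefficient form of Legendre's equation \<open>(1 - x\<^sup>2) P\<^sub>n'' - 2 x P\<^sub>n' + n (n + 1) P\<^sub>n = 0\<close>.\<close>
lemma legendre_coeff_ode:
  "of_nat ((i + 1) * (i + 2)) * legendre_coeff n (i + 2) =
     (of_nat (i * (i + 1)) - of_nat (n * (n + 1))) * legendre_coeff n i"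
proof (cases n)
  case 0
  then show ?thesis
    by (auto simp: legendre_coeff_0)
next
  case (Suc k)
  have "of_nat (i + 1) * (of_nat (i + 2) * legendre_coeff (Suc k) (Suc (Suc i)))
      = of_nat (i + 1) * (of_nat (k + 1 + Suc i) * legendre_coeff k (Suc i))"
    using legendre_coeff_raise[of "Suc i" k] by (simp add: numeral_2_eq_2)
  also have "\<dots> = of_nat (k + 1 + Suc i) * (of_nat (i + 1) * legendre_coeff k (Suc i))"
    by (simp add: algebra_simps)
  also have "\<dots> = of_nat (k + 1 + Suc i) * ((of_nat i - of_nat k - 1) * legendre_coeff (Suc k) i)"
    by (simp only: legendre_coeff_lower)
  finally show ?thesis
    using Suc by (simp add: numeral_2_eq_2 algebra_simps)
qed

lemma legendre_coeff_eq_0: "n < i \<Longrightarrow> legendre_coeff n i = 0"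
proof (induct n arbitrary: i)
  case 0
  then show ?case
    by (simp add: legendre_coeff_0)
next
  case (Suc n)
  then obtain j where j: "i = Suc j" "n < j"
    by (cases i) auto
  then have "of_nat (j + 1) * legendre_coeff (Suc n) (Suc j) = 0"
    using legendre_coeff_raise[of j n] Suc(1) by simp
  moreover have "(of_nat (j + 1) :: complex) \<noteq> 0"
    by (simp only: of_nat_eq_0_iff)
  ultimately show ?case
    using j by simp
qed

lemma legendre_coeff_self_neq_0: "legendre_coeff n n \<noteq> 0"
proof (induct n)
  case (Suc n)
  have "of_nat (n + 1) * legendre_coeff (Suc n) (Suc n) = of_nat (n + 1 + n) * legendre_coeff n n"
    by (rule legendre_coeff_raise)
  moreover have "(of_nat (n + 1 + n) :: complex) \<noteq> 0"
    by (simp only: of_nat_eq_0_iff)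
  ultimately show ?case
    using Suc by auto
qed simp

section \<open>Homogenised Legendre polynomials as eigenfunctions\<close>

definition Xdiff :: mpoly3 where "Xdiff = X12 - X13"
definition Xsum :: mpoly3 where "Xsum = X12 + X13"

lemma d12_d13_Xdiff_Xsum: "d12 Xdiff = 1" "d13 Xdiff = -1" "d12 Xsum = 1" "d13 Xsum = 1"
  by (simp_all add: Xdiff_def Xsum_def d12.add d12.diff d13.add d13.diff d12_basic d13_basic)

definition legendre_op :: "mpoly3 poly \<Rightarrow> mpoly3 \<Rightarrow> mpoly3" where
  "legendre_op F w = (X23\<^sup>2 - w\<^sup>2) * poly (pderiv (pderiv F)) w - 2 * w * poly (pderiv F) w"

lemma H1_cleared_poly_mult_poly:
  assumes F: "\<And>i. d12 (coeff F i) = 0" "\<And>i. d13 (coeff F i) = 0"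
    and G: "\<And>i. d12 (coeff G i) = 0" "\<And>i. d13 (coeff G i) = 0"
  shows "H1_cleared (poly F Xdiff * poly G Xsum) =
    legendre_op F Xdiff * poly G Xsum - poly F Xdiff * legendre_op G Xsum"
proof -
  have F': "\<And>i. d12 (coeff (pderiv F) i) = 0" "\<And>i. d13 (coeff (pderiv F) i) = 0"
    using d12.coeff_pderiv_eq_0[OF F(1)] d13.coeff_pderiv_eq_0[OF F(2)] by auto
  have G': "\<And>i. d12 (coeff (pderiv G) i) = 0" "\<And>i. d13 (coeff (pderiv G) i) = 0"
    using d12.coeff_pderiv_eq_0[OF G(1)] d13.coeff_pderiv_eq_0[OF G(2)] by auto
  define A A1 A2 where "A = poly F Xdiff" and "A1 = poly (pderiv F) Xdiff"
    and "A2 = poly (pderiv (pderiv F)) Xdiff"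
  define B B1 B2 where "B = poly G Xsum" and "B1 = poly (pderiv G) Xsum"
    and "B2 = poly (pderiv (pderiv G)) Xsum"
  have dA: "d12 A = A1" "d13 A = - A1" "d12 A1 = A2" "d13 A1 = - A2"
    unfolding A_def A1_def A2_def
    by (simp_all add: d12.poly_chain[OF F(1)] d13.poly_chain[OF F(2)] d12.poly_chain[OF F'(1)]
        d13.poly_chain[OF F'(2)] d12_d13_Xdiff_Xsum)
  have dB: "d12 B = B1" "d13 B = B1" "d12 B1 = B2" "d13 B1 = B2"
    unfolding B_def B1_def B2_def
    by (simp_all add: d12.poly_chain[OF G(1)] d13.poly_chain[OF G(2)] d12.poly_chain[OF G'(1)]
        d13.poly_chain[OF G'(2)] d12_d13_Xdiff_Xsum)
  have "H1_cleared (A * B) = legendre_op F Xdiff * B - A * legendre_op G Xsum"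
    unfolding H1_cleared_def legendre_op_def A_def[symmetric] A1_def[symmetric] A2_def[symmetric]
      B_def[symmetric] B1_def[symmetric] B2_def[symmetric]
    by (simp add: d12.mult d13.mult d12.add d13.add d12.diff d13.diff dA dB Xdiff_def Xsum_def algebra_simps power2_eq_square)
  then show ?thesis
    by (simp only: A_def B_def)
qed

text \<open>\<open>poly (legendre_hom k) w\<close> is the homogenisation \<open>X23\<^sup>k P\<^sub>k(w / X23)\<close>.\<close>
definition legendre_hom :: "nat \<Rightarrow> mpoly3 poly" where
  "legendre_hom k = (\<Sum>i\<le>k. monom (cst3 (legendre_coeff k i) * X23 ^ (k - i)) i)"

lemma coeff_legendre_hom: "coeff (legendre_hom k) i = cst3 (legendre_coeff k i) * X23 ^ (k - i)"
  by (cases "i \<le> k") (simp_all add: legendre_hom_def coeff_sum legendre_coeff_eq_0 cst3_simps)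

lemma d12_d13_coeff_legendre_hom: "d12 (coeff (legendre_hom k) i) = 0" "d13 (coeff (legendre_hom k) i) = 0"
  by (simp_all add: coeff_legendre_hom d12.mult d13.mult d12.power_eq_0 d13.power_eq_0
      d12_basic d13_basic)

lemma coeff_legendre_hom_recurrence:
  "X23\<^sup>2 * (of_nat ((i + 1) * (i + 2)) * coeff (legendre_hom k) (i + 2)) =
     (of_nat (i * (i + 1)) - of_nat (k * (k + 1))) * coeff (legendre_hom k) i"
proof -
  define c where "c = (of_nat (i * (i + 1)) - of_nat (k * (k + 1))) * legendre_coeff k i"
  have ode: "of_nat ((i + 1) * (i + 2)) * legendre_coeff k (i + 2) = c"
    unfolding c_def by (rule legendre_coeff_ode)
  have lhs: "X23\<^sup>2 * (of_nat ((i + 1) * (i + 2)) * coeff (legendre_hom k) (i + 2)) =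
      cst3 c * (X23\<^sup>2 * X23 ^ (k - (i + 2)))"
    by (simp add: coeff_legendre_hom of_nat_eq_cst3 cst3_simps ode[symmetric] algebra_simps)
  have rhs: "(of_nat (i * (i + 1)) - of_nat (k * (k + 1))) * coeff (legendre_hom k) i =
      cst3 c * X23 ^ (k - i)"
    by (simp add: coeff_legendre_hom of_nat_eq_cst3 cst3_simps c_def algebra_simps)
  show ?thesis
  proof (cases "i + 2 \<le> k")
    case True
    then have "k - i = 2 + (k - (i + 2))"
      by simp
    then have "X23\<^sup>2 * X23 ^ (k - (i + 2)) = X23 ^ (k - i)"
      by (simp only: power_add)
    then show ?thesis
      by (simp only: lhs rhs)
  next
    case False
    then have "c = 0"
      using ode legendre_coeff_eq_0[of k "i + 2"] by simp
    then show ?thesis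
      by (simp only: lhs rhs cst3_simps mult_zero_left)
  qed
qed

lemma coeff_pCons_0_1_mult: "coeff ([:0, 1:] * (p :: 'a::comm_semiring_1 poly)) i = (if i = 0 then 0 else coeff p (i - 1))"
  by (cases i) simp_all

lemma legendre_hom_ode:
  "smult (X23\<^sup>2) (pderiv (pderiv (legendre_hom k))) - [:0, 1:] * ([:0, 1:] * pderiv (pderiv (legendre_hom k)))
     - smult 2 ([:0, 1:] * pderiv (legendre_hom k)) + smult (of_nat (k * (k + 1))) (legendre_hom k) = 0"
  (is "?L = 0")
proof (rule poly_eqI)
  fix i :: nat
  consider "i = 0" | "i = 1" | j where "i = j + 2"
    by (metis add_2_eq_Suc' not0_implies_Suc One_nat_def)
  then show "coeff ?L i = coeff 0 i"
  proof cases
    case 1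
    then show ?thesis
      using coeff_legendre_hom_recurrence[of 0 k]
      by (simp add: coeff_pderiv coeff_pCons_0_1_mult numeral_2_eq_2 numeral_3_eq_3 algebra_simps)
  next
    case 2
    then show ?thesis
      using coeff_legendre_hom_recurrence[of 1 k]
      by (simp add: coeff_pderiv coeff_pCons_0_1_mult numeral_2_eq_2 numeral_3_eq_3 algebra_simps)
  next
    case 3
    then show ?thesis
      using coeff_legendre_hom_recurrence[of "j + 2" k]
      by (simp add: coeff_pderiv coeff_pCons_0_1_mult numeral_2_eq_2 numeral_3_eq_3 algebra_simps)
  qed
qed

lemma legendre_op_legendre_hom:
  "legendre_op (legendre_hom k) w = - (of_nat (k * (k + 1)) * poly (legendre_hom k) w)"
  using arg_cong[OF legendre_hom_ode, of "\<lambda>F. poly F w"]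
  by (simp add: legendre_op_def algebra_simps power2_eq_square eq_neg_iff_add_eq_0)

lemma H1_cleared_legendre_hom_product:
  "H1_cleared (poly (legendre_hom k) Xdiff * poly (legendre_hom l) Xsum) =
     (of_nat (l * (l + 1)) - of_nat (k * (k + 1))) * (poly (legendre_hom k) Xdiff * poly (legendre_hom l) Xsum)"
  by (simp add: H1_cleared_poly_mult_poly d12_d13_coeff_legendre_hom legendre_op_legendre_hom
      algebra_simps)

lemma poly_legendre_hom: "poly (legendre_hom k) w = (\<Sum>i\<le>k. cst3 (legendre_coeff k i) * X23 ^ (k - i) * w ^ i)"
  by (simp add: legendre_hom_def poly_sum poly_monom)

lemma frakP_eq_legendre_hom_product:
  assumes "k + l \<le> m"
  shows "frakP m k l = X23 ^ (m - (k + l)) * (poly (legendre_hom k) Xdiff * poly (legendre_hom l) Xsum)"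
proof -
  have "X23 ^ (m - (k + l)) * (poly (legendre_hom k) Xdiff * poly (legendre_hom l) Xsum) =
      (\<Sum>i\<le>k. \<Sum>j\<le>l. X23 ^ (m - (k + l)) * ((cst3 (legendre_coeff k i) * X23 ^ (k - i) * Xdiff ^ i) *
        (cst3 (legendre_coeff l j) * X23 ^ (l - j) * Xsum ^ j)))"
    unfolding poly_legendre_hom sum_product by (simp only: sum_distrib_left)
  also have "\<dots> = (\<Sum>i\<le>k. \<Sum>j\<le>l. cst3 (legendre_coeff k i * legendre_coeff l j) *
      (X12 - X13) ^ i * (X12 + X13) ^ j * X23 ^ (m - i - j))"
  proof (intro sum.cong refl)
    fix i j
    assume "i \<in> {..k}" "j \<in> {..l}"
    then have "m - i - j = (m - (k + l)) + (k - i) + (l - j)"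
      using assms by auto
    then show "X23 ^ (m - (k + l)) * ((cst3 (legendre_coeff k i) * X23 ^ (k - i) * Xdiff ^ i) *
        (cst3 (legendre_coeff l j) * X23 ^ (l - j) * Xsum ^ j)) =
      cst3 (legendre_coeff k i * legendre_coeff l j) * (X12 - X13) ^ i * (X12 + X13) ^ j * X23 ^ (m - i - j)"
      by (simp only: power_add Xdiff_def Xsum_def cst3_simps) (simp add: algebra_simps)
  qed
  finally show ?thesis
    by (simp add: frakP_def)
qed

lemma H1_cleared_frakP:
  assumes "k + l \<le> m"
  shows "H1_cleared (frakP m k l) = (of_nat (l * (l + 1)) - of_nat (k * (k + 1))) * frakP m k l"
proof -
  let ?P = "poly (legendre_hom k) Xdiff * poly (legendre_hom l) Xsum"
  have "H1_cleared (X23 ^ (m - (k + l)) * ?P) = X23 ^ (m - (k + l)) * H1_cleared ?P"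
    by (simp add: H1_cleared_mult_const d12.power_eq_0 d13.power_eq_0 d12_basic d13_basic)
  then show ?thesis
    using assms by (simp add: frakP_eq_legendre_hom_product H1_cleared_legendre_hom_product mult.left_commute)
qed

lemma H1_cleared_frakP_diagonal: "l + l \<le> m \<Longrightarrow> H1_cleared (frakP m l l) = 0"
  by (simp add: H1_cleared_frakP)

section \<open>Homogeneity and the corner coefficient of frakP\<close>

definition euler :: "mpoly3 \<Rightarrow> mpoly3" where
  "euler p = X12 * d12 p + X13 * d13 p + X23 * pderiv p"

interpretation euler: derivation euler
  by unfold_locales (simp_all add: euler_def d12.add d13.add d12.mult d13.mult pderiv_add pderiv_mult
      algebra_simps)

lemma mcoeff_euler: "mcoeff (euler p) a b c = of_nat (a + b + c) * mcoeff p a b c"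
  unfolding euler_def
  by (cases a; cases b; cases c) (simp_all add: mcoeff_simps mcoeff_X12_mult mcoeff_X13_mult
      mcoeff_X23_mult mcoeff_d12 mcoeff_d13 mcoeff_pderiv algebra_simps)

lemma homogeneous3_if_euler_eq:
  assumes "euler p = of_nat m * p"
  shows "homogeneous3 m p"
  unfolding homogeneous3_def
proof (intro allI impI)
  fix a b c
  assume "mcoeff p a b c \<noteq> 0"
  moreover have "of_nat (a + b + c) * mcoeff p a b c = of_nat m * mcoeff p a b c"
    using arg_cong[OF assms, of "\<lambda>q. mcoeff q a b c"]
    by (simp add: mcoeff_euler of_nat_eq_cst3 mcoeff_simps)
  ultimately have "(of_nat (a + b + c) :: complex) = of_nat m"
    by simp
  then show "a + b + c = m"
    by (simp only: of_nat_eq_iff)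
qed

lemma euler_basic: "euler (cst3 k) = 0" "euler Xdiff = Xdiff" "euler Xsum = Xsum" "euler X23 = X23"
  by (simp_all add: euler_def Xdiff_def Xsum_def d12.add d12.diff d13.add d13.diff pderiv_add
      pderiv_diff d12_basic d13_basic pderiv_basic)

lemma euler_power:
  assumes "euler w = w"
  shows "euler (w ^ n) = of_nat n * w ^ n"
proof (cases n)
  case (Suc k)
  then show ?thesis
    by (simp only: euler.power_Suc assms) (simp add: algebra_simps)
qed (simp add: euler.one)

lemma euler_mult_eigen: "euler p = \<alpha> * p \<Longrightarrow> euler q = \<beta> * q \<Longrightarrow> euler (p * q) = (\<alpha> + \<beta>) * (p * q)"
  by (simp add: euler.mult algebra_simps)

lemma frakP_eq_sum:
  "frakP m k l = (\<Sum>i\<le>k. \<Sum>j\<le>l.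
     X23 ^ (m - i - j) * (cst3 (legendre_coeff k i * legendre_coeff l j) * (Xdiff ^ i * Xsum ^ j)))"
  unfolding frakP_def Xdiff_def Xsum_def by (intro sum.cong refl) (simp add: algebra_simps)

lemma euler_frakP:
  assumes "k + l \<le> m"
  shows "euler (frakP m k l) = of_nat m * frakP m k l"
  unfolding frakP_eq_sum euler.sum sum_distrib_left
proof (intro sum.cong refl)
  fix i j
  assume "i \<in> {..k}" "j \<in> {..l}"
  then have "i + j \<le> m"
    using assms by simp
  then have degree: "of_nat (m - i - j) + (0 + (of_nat i + of_nat j)) = (of_nat m :: mpoly3)"
    by (metis add_0 of_nat_add diff_diff_left le_add_diff_inverse2)
  let ?t = "X23 ^ (m - i - j) * (cst3 (legendre_coeff k i * legendre_coeff l j) * (Xdiff ^ i * Xsum ^ j))"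
  have "euler ?t = (of_nat (m - i - j) + (0 + (of_nat i + of_nat j))) * ?t"
    by (intro euler_mult_eigen euler_power euler_basic) (simp add: euler_basic)
  then show "euler ?t = of_nat m * ?t"
    by (simp only: degree)
qed

lemma homogeneous3_frakP: "k + l \<le> m \<Longrightarrow> homogeneous3 m (frakP m k l)"
  by (intro homogeneous3_if_euler_eq euler_frakP)

lemma deg_X12_X13_less_frakP:
  assumes "k + l \<le> m"
  shows "deg_X12_X13_less (Suc (k + l)) (frakP m k l)"
  unfolding deg_X12_X13_less_def
proof (intro allI impI)
  fix a b c
  assume "Suc (k + l) \<le> a + b"
  show "mcoeff (frakP m k l) a b c = 0"
  proof (cases "a + b + c = m")
    case True
    then show ?thesis
      using \<open>Suc (k + l) \<le> a + b\<close>
      unfolding frakP_eq_sum mcoeff_sum mcoeff_X23_power_mult by (intro sum.neutral ballI) auto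
  next
    case False
    then show ?thesis
      using homogeneous3_frakP[OF assms] by (auto simp: homogeneous3_def)
  qed
qed

lemma mcoeff_Xdiff_power_mult:
  "mcoeff (Xdiff ^ i * q) 0 b c = (if b < i then 0 else (-1) ^ i * mcoeff q 0 (b - i) c)"
proof (induct i arbitrary: b)
  case (Suc i)
  have "mcoeff (Xdiff ^ Suc i * q) 0 b c = mcoeff (X12 * (Xdiff ^ i * q)) 0 b c - mcoeff (X13 * (Xdiff ^ i * q)) 0 b c"
    by (simp add: Xdiff_def algebra_simps mcoeff_simps)
  also have "\<dots> = (if b < Suc i then 0 else (-1) ^ Suc i * mcoeff q 0 (b - Suc i) c)"
    by (cases b) (simp_all add: mcoeff_X12_mult mcoeff_X13_mult Suc)
  finally show ?case .
qed simp

lemma mcoeff_Xsum_power_mult: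
  "mcoeff (Xsum ^ i * q) 0 b c = (if b < i then 0 else mcoeff q 0 (b - i) c)"
proof (induct i arbitrary: b)
  case (Suc i)
  have "mcoeff (Xsum ^ Suc i * q) 0 b c = mcoeff (X12 * (Xsum ^ i * q)) 0 b c + mcoeff (X13 * (Xsum ^ i * q)) 0 b c"
    by (simp add: Xsum_def algebra_simps mcoeff_simps)
  also have "\<dots> = (if b < Suc i then 0 else mcoeff q 0 (b - Suc i) c)"
    by (cases b) (simp_all add: mcoeff_X12_mult mcoeff_X13_mult Suc)
  finally show ?case .
qed simp

lemma sum_sum_atMost_eq_corner:
  fixes g :: "nat \<Rightarrow> nat \<Rightarrow> 'a::comm_monoid_add"
  assumes "\<And>i j. i \<le> k \<Longrightarrow> j \<le> l \<Longrightarrow> (i, j) \<noteq> (k, l) \<Longrightarrow> g i j = 0"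
  shows "(\<Sum>i\<le>k. \<Sum>j\<le>l. g i j) = g k l"
proof -
  have "(\<Sum>j\<le>l. g i j) = (if i = k then g k l else 0)" if "i \<le> k" for i
  proof -
    have "(\<Sum>j\<le>l. g i j) = g i l + (\<Sum>j\<in>{..l} - {l}. g i j)"
      by (simp add: sum.remove)
    also have "(\<Sum>j\<in>{..l} - {l}. g i j) = 0"
      using that by (intro sum.neutral) (auto intro: assms)
    finally show ?thesis
      using assms[of i l] that by auto
  qed
  then have "(\<Sum>i\<le>k. \<Sum>j\<le>l. g i j) = (\<Sum>i\<le>k. if i = k then g k l else 0)"
    by (intro sum.cong) simp_all
  also have "\<dots> = g k l"
    by simp
  finally show ?thesis .
qed

lemma mcoeff_frakP_corner:
  assumes "k + l \<le> m"
  shows "mcoeff (frakP m k l) 0 (k + l) (m - (k + l)) = (-1) ^ k * (legendre_coeff k k * legendre_coeff l l)"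
proof -
  let ?c = "\<lambda>i j. legendre_coeff k i * legendre_coeff l j"
  have "mcoeff (frakP m k l) 0 (k + l) (m - (k + l)) = (\<Sum>i\<le>k. \<Sum>j\<le>l.
      if m - (k + l) < m - i - j then 0
      else mcoeff (cst3 (?c i j) * (Xdiff ^ i * Xsum ^ j)) 0 (k + l) (m - (k + l) - (m - i - j)))"
    unfolding frakP_eq_sum mcoeff_sum mcoeff_X23_power_mult ..
  also have "\<dots> = mcoeff (cst3 (?c k l) * (Xdiff ^ k * Xsum ^ l)) 0 (k + l) 0"
    using assms by (subst sum_sum_atMost_eq_corner) auto
  also have "\<dots> = (-1) ^ k * ?c k l"
    by (simp add: mcoeff_simps mcoeff_Xdiff_power_mult mcoeff_Xsum_power_mult[where q = 1, simplified])
      (simp add: mcoeff_def)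
  finally show ?thesis .
qed

section \<open>Spanning the kernel\<close>

lemma homogeneous3_cst3_mult: "homogeneous3 m p \<Longrightarrow> homogeneous3 m (cst3 k * p)"
  by (simp add: homogeneous3_def mcoeff_simps)

lemma homogeneous3_diff: "homogeneous3 m p \<Longrightarrow> homogeneous3 m q \<Longrightarrow> homogeneous3 m (p - q)"
  unfolding homogeneous3_def by (metis mcoeff_simps(2) diff_self)

lemma homogeneous3_sum: "(\<And>i. i \<in> A \<Longrightarrow> homogeneous3 m (f i)) \<Longrightarrow> homogeneous3 m (\<Sum>i\<in>A. f i)"
  unfolding homogeneous3_def mcoeff_sum by (metis (mono_tags, lifting) sum.neutral)

lemma deg_X12_X13_less_if_homogeneous3: "homogeneous3 m p \<Longrightarrow> deg_X12_X13_less (Suc m) p"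
  unfolding homogeneous3_def deg_X12_X13_less_def by fastforce

lemma kernel_eliminate_top_level:
  assumes p: "homogeneous3 m p" "H1_cleared p = 0" "deg_X12_X13_less (Suc (2 * l)) p"
    and "2 * l \<le> m"
  shows "\<exists>\<kappa>. deg_X12_X13_less (2 * l) (p - cst3 \<kappa> * frakP m l l)"
proof -
  let ?F = "frakP m l l"
  define \<kappa> where "\<kappa> = mcoeff p 0 (2 * l) (m - 2 * l) / mcoeff ?F 0 (2 * l) (m - 2 * l)"
  define q where "q = p - cst3 \<kappa> * ?F"
  have F: "homogeneous3 m ?F" "H1_cleared ?F = 0" "deg_X12_X13_less (Suc (2 * l)) ?F"
    using homogeneous3_frakP[of l l m] H1_cleared_frakP_diagonal[of l m] deg_X12_X13_less_frakP[of l l m]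
      \<open>2 * l \<le> m\<close>
    by (simp_all add: mult_2)
  have lead: "mcoeff ?F 0 (2 * l) (m - 2 * l) \<noteq> 0"
    using mcoeff_frakP_corner[of l l m] \<open>2 * l \<le> m\<close> by (simp add: mult_2 legendre_coeff_self_neq_0)
  have "homogeneous3 m q"
    unfolding q_def by (intro homogeneous3_diff homogeneous3_cst3_mult p(1) F(1))
  have corner: "mcoeff q 0 (2 * l) c = 0" for c
  proof (cases "c = m - 2 * l")
    case True
    then show ?thesis
      using lead by (simp add: q_def \<kappa>_def mcoeff_simps)
  next
    case False
    then have "0 + 2 * l + c \<noteq> m"
      using \<open>2 * l \<le> m\<close> by simp
    then show ?thesis
      using \<open>homogeneous3 m q\<close> unfolding homogeneous3_def by blast
  qed
  have "H1_cleared q = 0"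
    using p(2) F(2) by (simp add: q_def H1_cleared_diff H1_cleared_cst3_mult)
  moreover have "deg_X12_X13_less (Suc (2 * l)) q"
    using p(3) F(3) by (simp add: q_def deg_X12_X13_less_def mcoeff_simps)
  ultimately have "deg_X12_X13_less (2 * l) q"
    by (rule kernel_top_level_vanishes) (simp add: corner)
  then show ?thesis
    unfolding q_def by blast
qed

definition frakP_span :: "nat \<Rightarrow> nat \<Rightarrow> mpoly3 set" where
  "frakP_span m n = {p. \<exists>c. p = (\<Sum>l<n. cst3 (c l) * frakP m l l)}"

lemma frakP_span_0: "0 \<in> frakP_span m 0"
  by (simp add: frakP_span_def)

lemma frakP_span_Suc:
  assumes "q \<in> frakP_span m n"
  shows "q + cst3 \<kappa> * frakP m n n \<in> frakP_span m (Suc n)"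
proof -
  obtain c where q: "q = (\<Sum>l<n. cst3 (c l) * frakP m l l)"
    using assms by (auto simp: frakP_span_def)
  have "q + cst3 \<kappa> * frakP m n n = (\<Sum>l<Suc n. cst3 ((c(n := \<kappa>)) l) * frakP m l l)"
    unfolding q by (simp add: sum.lessThan_Suc)
  then show ?thesis
    unfolding frakP_span_def by blast
qed

lemma kernel_in_frakP_span_of_deg_less:
  assumes "N \<le> Suc m" "homogeneous3 m p" "H1_cleared p = 0" "deg_X12_X13_less N p"
  shows "p \<in> frakP_span m ((N + 1) div 2)"
  using assms
proof (induct N arbitrary: p)
  case 0
  then have "p = 0"
    by (simp add: mpoly3_eq_iff deg_X12_X13_less_def mcoeff_simps)
  then show ?case
    by (simp add: frakP_span_0)
next
  case (Suc N)
  show ?case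
  proof (cases "odd N")
    case True
    then have "deg_X12_X13_less N p"
      using kernel_top_level_vanishes[of p N] Suc.prems by simp
    moreover have "(Suc N + 1) div 2 = (N + 1) div 2"
      using True by presburger
    ultimately show ?thesis
      using Suc.hyps[of p] Suc.prems by simp
  next
    case False
    then obtain l where N: "N = 2 * l"
      by (auto elim: evenE)
    then obtain \<kappa> where "deg_X12_X13_less N (p - cst3 \<kappa> * frakP m l l)"
      using kernel_eliminate_top_level[of m p l] Suc.prems N by auto
    moreover have "homogeneous3 m (p - cst3 \<kappa> * frakP m l l)"
      using Suc.prems N by (intro homogeneous3_diff homogeneous3_cst3_mult homogeneous3_frakP) auto
    moreover have "H1_cleared (p - cst3 \<kappa> * frakP m l l) = 0"
      using Suc.prems N by (simp add: H1_cleared_diff H1_cleared_cst3_mult H1_cleared_frakP_diagonal)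
    ultimately have "p - cst3 \<kappa> * frakP m l l \<in> frakP_span m l"
      using Suc.hyps[of "p - cst3 \<kappa> * frakP m l l"] Suc.prems N by simp
    then show ?thesis
      using frakP_span_Suc[of "p - cst3 \<kappa> * frakP m l l" m l \<kappa>] N by simp
  qed
qed

lemma kernel_in_frakP_span:
  "homogeneous3 m p \<Longrightarrow> H1_cleared p = 0 \<Longrightarrow> p \<in> frakP_span m (Suc (m div 2))"
  using kernel_in_frakP_span_of_deg_less[of "Suc m" m p] deg_X12_X13_less_if_homogeneous3[of m p] by simp

lemma frakP_span_in_kernel:
  assumes "p \<in> frakP_span m (Suc (m div 2))"
  shows "homogeneous3 m p \<and> H1_cleared p = 0"
proof -
  obtain c where p: "p = (\<Sum>l<Suc (m div 2). cst3 (c l) * frakP m l l)"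
    using assms by (auto simp: frakP_span_def)
  have l: "l + l \<le> m" if "l \<in> {..<Suc (m div 2)}" for l
    using that by (simp add: less_Suc_eq_le)
  have "homogeneous3 m p"
    unfolding p by (intro homogeneous3_sum homogeneous3_cst3_mult homogeneous3_frakP l)
  moreover have "H1_cleared p = 0"
    unfolding p H1_cleared_sum by (intro sum.neutral ballI) (simp add: H1_cleared_cst3_mult H1_cleared_frakP_diagonal l)
  ultimately show ?thesis ..
qed

theorem mainTheorem19:
  fixes m :: nat
  shows "{p. homogeneous3 m p \<and> p \<in> kerH1} =
         {p. \<exists>c :: nat \<Rightarrow> complex. p = (\<Sum>l\<le>m div 2. cst3 (c l) * frakP m l l)}"
proof -
  have "{p. \<exists>c :: nat \<Rightarrow> complex. p = (\<Sum>l\<le>m div 2. cst3 (c l) * frakP m l l)} =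
      frakP_span m (Suc (m div 2))"
    by (simp add: frakP_span_def lessThan_Suc_atMost)
  moreover have "{p. homogeneous3 m p \<and> p \<in> kerH1} = frakP_span m (Suc (m div 2))"
    using kernel_in_frakP_span frakP_span_in_kernel by (auto simp: kerH1_iff_H1_cleared)
  ultimately show ?thesis
    by simp
qed

end
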